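(* Let $F\in Sh^{s,0}_{\Lambda_L}(X)\cap Mod(X)$ be reduced and let $f=(f_1,\dots,f_r)$ and $g=(g_1,\dots,g_r)$ be two local trivializations for $F$. Then $\epsilon_{(F,f)}$ and $\epsilon_{(F,g)}$ are equivalent under the dilation action, i.e. they define the same element of $\mathcal{A}ug$.
   Context: $X=\mathbb{R}^3$ or $S^3$, $k$ a field, $(L,L')$ an $r$-component framed oriented link, $L=K_1\sqcup\dots\sqcup K_r$. Sheaves in $Sh^{s,0}_{\Lambda_L}(X)\cap Mod(X)$ (sheaves of $k$-vector spaces with micro-support at infinity in the unit conormal of $L$, microlocally simple with Morse cone in degree $0$) are equivalent to data $(V,\rho,W_s,\rho_s,T_s)$: $\rho:\pi_1(X\setminus L)\to GL(V)$ the local system on the complement, $W_s$ the stalk on $K_s$, $T_s:W_s\to V$ the injective restriction map with one-dimensional cokernel, the meridian of $K_s$ acting trivially on its image and the longitude action $\rho(\ell_s)$ intertwining with the monodromy of $K_s$; we view $W_s\subset V$. $F$ is reduced if it admits no nonzero locally constant subsheaf, no nonzero locally constant quotient, and no direct summand $F'$ that is the kernel of a surjection from a nonzero locally constant sheaf onto $i'_*k_{L''}$ for a sublink $L''$. $A_c$ denotes trivialized parallel transport along a path $c$, $M_t=\rho(m_t)$. A local trivialization is an $r$-tuple of surjective linear maps $f_s:V\to k$ with $f_s|_{W_s}=0$. $\epsilon_{(F,f)}:\mathrm{Cord}(L)\to k$ is the augmentation of the framed cord algebra given on generators by $\epsilon(c_{st})=f_sA_{c_{st}}(\mathrm{id}_V-M_t)f_t^{-1}$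 for framed cords $c_{st}$ from the framing curve of $K_s$ to that of $K_t$, $\epsilon(\lambda_s)=f_sA_{\ell_s}f_s^{-1}$, $\epsilon(\mu_s)=1-f_s(\mathrm{id}_V-M_s)f_s^{-1}$, where $f_s^{-1}$ is any right inverse of $f_s$ (the result is independent of this choice). Dilation: $d\in(k^* )^r$ sends $\epsilon$ to $\epsilon'$ with $\epsilon'(\lambda_s)=\epsilon(\lambda_s)$, $\epsilon'(\mu_s)=\epsilon(\mu_s)$, $\epsilon'(c_{st})=\frac{d_s}{d_t}\epsilon(c_{st})$; $\mathcal{A}ug$ is the set of augmentations modulo this action. *)

theory Defs
  imports Complex_Main "HOL-Algebra.Group"
begin

text \<open>
Algebraic model of a sheaf F in Sh^{s,0}_{Lambda_L}(X) cap Mod(X) via the data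
(V, rho, W_s, rho_s, T_s) described in the context.  G plays the role of pi_1(X minus L) (with a base point; each W_s is
viewed inside V via a fixed basing path), m s and l s are the (based) meridian and
longitude of K_s, rho is the monodromy representation on V (a k-vector space, given by
the scalar multiplication scale), and W s is the subspace T_s(W_s) of V.
The monodromy rho_s of K_s is the restriction of rho (l s) to W s.
\<close>

definition codim1_in :: "('k::field \<Rightarrow> 'v::ab_group_add \<Rightarrow> 'v) \<Rightarrow> 'v set \<Rightarrow> 'v set \<Rightarrow> bool" where
  "codim1_in scale A W \<longleftrightarrow> W \<subseteq> A \<and> (\<exists>v\<in>A. v \<notin> W \<and> (\<forall>x\<in>A. \<exists>c. x - scale c v \<in> W))"

definition is_rep :: "('k::field \<Rightarrow> 'v::ab_group_add \<Rightarrow> 'v) \<Rightarrow> ('g, 'b) monoid_scheme \<Rightarrow> ('g \<Rightarrow> 'v \<Rightarrow> 'v) \<Rightarrow> bool" where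
  "is_rep scale G \<rho> \<longleftrightarrow>
     (\<forall>g\<in>carrier G. Vector_Spaces.linear scale scale (\<rho> g) \<and> bij (\<rho> g)) \<and>
     (\<forall>g\<in>carrier G. \<forall>h\<in>carrier G. \<rho> (g \<otimes>\<^bsub>G\<^esub> h) = \<rho> g \<circ> \<rho> h) \<and>
     \<rho> \<one>\<^bsub>G\<^esub> = id"

definition link_sheaf_data ::
  "('k::field \<Rightarrow> 'v::ab_group_add \<Rightarrow> 'v) \<Rightarrow> ('g, 'b) monoid_scheme \<Rightarrow> ('g \<Rightarrow> 'v \<Rightarrow> 'v)
   \<Rightarrow> nat \<Rightarrow> (nat \<Rightarrow> 'g) \<Rightarrow> (nat \<Rightarrow> 'g) \<Rightarrow> (nat \<Rightarrow> 'v set) \<Rightarrow> bool" where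
  "link_sheaf_data scale G \<rho> r m l W \<longleftrightarrow>
     vector_space scale \<and> group G \<and> is_rep scale G \<rho> \<and>
     (\<forall>s\<in>{1..r}.
        m s \<in> carrier G \<and> l s \<in> carrier G \<and> m s \<otimes>\<^bsub>G\<^esub> l s = l s \<otimes>\<^bsub>G\<^esub> m s \<and>
        module.subspace scale (W s) \<and> codim1_in scale UNIV (W s) \<and>
        (\<forall>w\<in>W s. \<rho> (m s) w = w) \<and>
        \<rho> (l s) ` W s \<subseteq> W s)"

definition no_const_subsheaf where
  "no_const_subsheaf scale G \<rho> r W \<longleftrightarrow>
     \<not> (\<exists>U. module.subspace scale U \<and> U \<noteq> {0} \<and> (\<forall>s\<in>{1..r}. U \<subseteq> W s) \<and>
            (\<forall>g\<in>carrier G. \<forall>u\<in>U. \<rho> g u = u))"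

definition no_const_quotient where
  "no_const_quotient scale G \<rho> r W \<longleftrightarrow>
     \<not> (\<exists>U. module.subspace scale U \<and> U \<noteq> UNIV \<and>
            (\<forall>g\<in>carrier G. \<forall>v. \<rho> g v - v \<in> U) \<and>
            (\<forall>s\<in>{1..r}. \<forall>v. \<exists>w\<in>W s. v - w \<in> U))"

text \<open>A direct summand F' of F which is the kernel of a surjection from the constant sheaf
E_X (E nonzero) onto i'_* k_{L''}: its data are V' = E (trivial monodromy), W'_s = E for
s not in L'' and W'_s = a hyperplane of E for s in L''; being a direct summand means
V = E (+) V'' with V'' rho-invariant and W_s = (W_s cap E) (+) (W_s cap V'').\<close>
definition no_special_summand where
  "no_special_summand scale G \<rho> r W \<longleftrightarrow>
     \<not> (\<exists>E V2 L2. module.subspace scale E \<and> E \<noteq> {0} \<and> module.subspace scale V2 \<and>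
            E \<inter> V2 = {0} \<and> (\<forall>v. \<exists>e\<in>E. \<exists>y\<in>V2. v = e + y) \<and>
            (\<forall>g\<in>carrier G. \<forall>e\<in>E. \<rho> g e = e) \<and>
            (\<forall>g\<in>carrier G. \<rho> g ` V2 \<subseteq> V2) \<and>
            L2 \<subseteq> {1..r} \<and>
            (\<forall>s\<in>{1..r}. \<forall>w\<in>W s. \<exists>e\<in>E \<inter> W s. \<exists>y\<in>V2 \<inter> W s. w = e + y) \<and>
            (\<forall>s\<in>{1..r} - L2. E \<subseteq> W s) \<and>
            (\<forall>s\<in>L2. codim1_in scale E (E \<inter> W s)))"

definition reduced where
  "reduced scale G \<rho> r W \<longleftrightarrow>
     no_const_subsheaf scale G \<rho> r W \<and> no_const_quotient scale G \<rho> r W \<and>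
     no_special_summand scale G \<rho> r W"

definition local_trivialization ::
  "('k::field \<Rightarrow> 'v::ab_group_add \<Rightarrow> 'v) \<Rightarrow> nat \<Rightarrow> (nat \<Rightarrow> 'v set) \<Rightarrow> (nat \<Rightarrow> 'v \<Rightarrow> 'k) \<Rightarrow> bool" where
  "local_trivialization scale r W f \<longleftrightarrow>
     (\<forall>s\<in>{1..r}. Vector_Spaces.linear scale ((*) :: 'k \<Rightarrow> 'k \<Rightarrow> 'k) (f s) \<and> surj (f s) \<and>
                 (\<forall>w\<in>W s. f s w = 0))"

text \<open>A right inverse of f : V -> k is determined by the vector f^{-1}(1).\<close>
definition rinv_vec :: "('v \<Rightarrow> 'k::field) \<Rightarrow> 'v" where
  "rinv_vec h = (SOME v. h v = 1)"

text \<open>epsilon(c_st) for a cord whose trivialized parallel transport is rho gamma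
(gamma the based loop obtained by closing the cord with the basing paths).\<close>
definition aug_cord where
  "aug_cord \<rho> m f s t \<gamma> = f s (\<rho> \<gamma> (rinv_vec (f t) - \<rho> (m t) (rinv_vec (f t))))"

definition aug_lambda where
  "aug_lambda \<rho> l f s = f s (\<rho> (l s) (rinv_vec (f s)))"

definition aug_mu where
  "aug_mu \<rho> m f s = 1 - f s (rinv_vec (f s) - \<rho> (m s) (rinv_vec (f s)))"

definition dilation_equiv where
  "dilation_equiv G \<rho> r m l f g \<longleftrightarrow>
     (\<exists>d :: nat \<Rightarrow> 'k::field.
        (\<forall>s\<in>{1..r}. d s \<noteq> 0) \<and>
        (\<forall>s\<in>{1..r}. aug_lambda \<rho> l g s = aug_lambda \<rho> l f s \<and> aug_mu \<rho> m g s = aug_mu \<rho> m f s) \<and>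
        (\<forall>s\<in>{1..r}. \<forall>t\<in>{1..r}. \<forall>\<gamma>\<in>carrier G.
            aug_cord \<rho> m g s t \<gamma> = d s / d t * aug_cord \<rho> m f s t \<gamma>))"

end

theory Submission
  imports Defs
begin

text \<open>
  Each W s is a hyperplane of V and f s, g s are nonzero functionals vanishing on it, so
  both have kernel W s and g s = d s * f s for a nonzero scalar d s.  Consequently the
  chosen right inverses satisfy rinv_vec (g s) = (1 / d s) *s rinv_vec (f s) modulo W s.
  The meridian fixes W s pointwise and the longitude maps W s into itself, so the values
  on meridians and longitudes are unchanged, while the cord values acquire the factor
  d s / d t.
\<close>

lemma rinv_vec_eq_1: "surj h \<Longrightarrow> h (rinv_vec h) = (1::'k::field)"
  unfolding rinv_vec_def by (metis (mono_tags) someI surjD)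

context vector_space
begin

lemma hyperplane_functional_eq_0_iff:
  assumes hyperplane: "codim1_in scale UNIV W"
    and lin: "Vector_Spaces.linear scale (*) h" and "surj h" and vanish: "\<forall>w\<in>W. h w = 0"
  shows "h x = 0 \<longleftrightarrow> x \<in> W"
proof
  note h_hom = module_hom_linearI[OF lin]
  from hyperplane obtain v where span: "\<And>y. \<exists>c. y - c *s v \<in> W"
    unfolding codim1_in_def by auto
  have h_coset: "h y = c * h v" if "y - c *s v \<in> W" for y c
    using vanish that module_hom.diff[OF h_hom] module_hom.scale[OF h_hom] by fastforce
  have "h v \<noteq> 0"
  proof
    assume "h v = 0"
    obtain y where "h y = 1" using \<open>surj h\<close> by (metis surjD)
    with span h_coset \<open>h v = 0\<close> show False by (metis mult_zero_right zero_neq_one)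
  qed
  assume "h x = 0"
  obtain c where c: "x - c *s v \<in> W" using span by blast
  with h_coset \<open>h x = 0\<close> \<open>h v \<noteq> 0\<close> have "c = 0" by simp
  with c show "x \<in> W" by simp
qed (use vanish in blast)

lemma functionals_same_kernel_proportional:
  assumes linf: "Vector_Spaces.linear scale (*) f" and ling: "Vector_Spaces.linear scale (*) g"
    and "surj f" and same_kernel: "\<And>x. f x = 0 \<longleftrightarrow> g x = 0"
  shows "\<exists>c. c \<noteq> 0 \<and> (\<forall>x. g x = c * f x)"
proof -
  note f_hom = module_hom_linearI[OF linf] and g_hom = module_hom_linearI[OF ling]
  obtain u where u: "f u = 1" using \<open>surj f\<close> by (metis surjD)
  have "g x = g u * f x" for x
  proof -
    have "f (x - f x *s u) = 0"
      using u module_hom.diff[OF f_hom] module_hom.scale[OF f_hom] by simp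
    then have "g (x - f x *s u) = 0" using same_kernel by blast
    then show ?thesis using module_hom.diff[OF g_hom] module_hom.scale[OF g_hom] by simp
  qed
  moreover have "g u \<noteq> 0" using same_kernel[of u] u by simp
  ultimately show ?thesis by blast
qed

lemma rinv_vec_proportional:
  assumes lin: "Vector_Spaces.linear scale (*) f" and "surj f"
    and "c \<noteq> 0" and proportional: "\<forall>x. g x = c * f x"
  shows "f (rinv_vec g - (1 / c) *s rinv_vec f) = 0"
proof -
  note f_hom = module_hom_linearI[OF lin]
  have f_rinv: "f (rinv_vec f) = 1" using \<open>surj f\<close> by (rule rinv_vec_eq_1)
  then have "g ((1 / c) *s rinv_vec f) = 1"
    using proportional module_hom.scale[OF f_hom] \<open>c \<noteq> 0\<close> by simp
  then have "g (rinv_vec g) = 1" unfolding rinv_vec_def by (rule someI)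
  then have "f (rinv_vec g) = 1 / c" using proportional \<open>c \<noteq> 0\<close> by (simp add: field_simps)
  then show ?thesis using f_rinv module_hom.diff[OF f_hom] module_hom.scale[OF f_hom] by simp
qed

lemma diff_image_eq_if_fixes:
  assumes lin: "Vector_Spaces.linear scale scale P" and fixes_W: "\<forall>w\<in>W. P w = w"
    and "v - a *s u \<in> W"
  shows "v - P v = a *s (u - P u)"
proof -
  note P_hom = module_hom_linearI[OF lin]
  define w where "w = v - a *s u"
  have "v = a *s u + w" and "P w = w" using fixes_W \<open>v - a *s u \<in> W\<close> by (auto simp: w_def)
  then show ?thesis
    using module_hom.add[OF P_hom] module_hom.scale[OF P_hom] by (simp add: scale_right_diff_distrib)
qed

lemma functional_image_eq_if_preserves:
  assumes linh: "Vector_Spaces.linear scale (*) h" and vanish: "\<forall>w\<in>W. h w = 0"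
    and linQ: "Vector_Spaces.linear scale scale Q" and preserves_W: "Q ` W \<subseteq> W"
    and "v - a *s u \<in> W"
  shows "h (Q v) = a * h (Q u)"
proof -
  note h_hom = module_hom_linearI[OF linh] and Q_hom = module_hom_linearI[OF linQ]
  have "h (Q (v - a *s u)) = 0" using vanish preserves_W \<open>v - a *s u \<in> W\<close> by blast
  then show ?thesis
    using module_hom.diff[OF h_hom] module_hom.scale[OF h_hom]
      module_hom.diff[OF Q_hom] module_hom.scale[OF Q_hom] by simp
qed

end

lemma local_trivializations_proportional:
  assumes "link_sheaf_data scale G \<rho> r m l W"
    and f: "local_trivialization scale r W f" and g: "local_trivialization scale r W g"
  obtains d where "\<forall>s\<in>{1..r}. d s \<noteq> 0 \<and> (\<forall>x. g s x = d s * f s x) \<and>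
    rinv_vec (g s) - scale (1 / d s) (rinv_vec (f s)) \<in> W s"
proof -
  interpret vector_space scale using assms(1) by (simp add: link_sheaf_data_def)
  have "\<exists>c. c \<noteq> 0 \<and> (\<forall>x. g s x = c * f s x) \<and>
      rinv_vec (g s) - scale (1 / c) (rinv_vec (f s)) \<in> W s" if s: "s \<in> {1..r}" for s
  proof -
    have hyperplane: "codim1_in scale UNIV (W s)"
      using assms(1) s by (simp add: link_sheaf_data_def)
    have f_s: "Vector_Spaces.linear scale (*) (f s)" "surj (f s)" "\<forall>w\<in>W s. f s w = 0"
      and g_s: "Vector_Spaces.linear scale (*) (g s)" "surj (g s)" "\<forall>w\<in>W s. g s w = 0"
      using f g s by (auto simp: local_trivialization_def)
    note kernel_f = hyperplane_functional_eq_0_iff[OF hyperplane f_s]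
      and kernel_g = hyperplane_functional_eq_0_iff[OF hyperplane g_s]
    obtain c where c: "c \<noteq> 0" "\<forall>x. g s x = c * f s x"
      using functionals_same_kernel_proportional[OF f_s(1) g_s(1) f_s(2)] kernel_f kernel_g
      by metis
    with rinv_vec_proportional[OF f_s(1,2) c] kernel_f show ?thesis by blast
  qed
  then show ?thesis using that by metis
qed

theorem proposition4p6:
  fixes scale :: "'k::field \<Rightarrow> 'v::ab_group_add \<Rightarrow> 'v"
    and G :: "('g, 'b) monoid_scheme" and \<rho> :: "'g \<Rightarrow> 'v \<Rightarrow> 'v"
    and r :: nat and m l :: "nat \<Rightarrow> 'g" and W :: "nat \<Rightarrow> 'v set"
    and f g :: "nat \<Rightarrow> 'v \<Rightarrow> 'k"
  assumes "link_sheaf_data scale G \<rho> r m l W"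
    and "reduced scale G \<rho> r W"
    and "local_trivialization scale r W f"
    and "local_trivialization scale r W g"
  shows "dilation_equiv G \<rho> r m l f g"
proof -
  interpret vector_space scale using assms(1) by (simp add: link_sheaf_data_def)
  have lin_\<rho>: "Vector_Spaces.linear scale scale (\<rho> \<gamma>)" if "\<gamma> \<in> carrier G" for \<gamma>
    using assms(1) that by (simp add: link_sheaf_data_def is_rep_def)
  have f_s: "Vector_Spaces.linear scale (*) (f s)" "\<forall>w\<in>W s. f s w = 0" if "s \<in> {1..r}" for s
    using assms(3) that by (auto simp: local_trivialization_def)
  obtain d where d: "\<forall>s\<in>{1..r}. d s \<noteq> 0 \<and> (\<forall>x. g s x = d s * f s x) \<and>
      rinv_vec (g s) - scale (1 / d s) (rinv_vec (f s)) \<in> W s"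
    using local_trivializations_proportional[OF assms(1,3,4)] .
  have meridian: "rinv_vec (g s) - \<rho> (m s) (rinv_vec (g s))
      = scale (1 / d s) (rinv_vec (f s) - \<rho> (m s) (rinv_vec (f s)))" if "s \<in> {1..r}" for s
    by (intro diff_image_eq_if_fixes[where W = "W s"] lin_\<rho>)
      (use assms(1) d that in \<open>auto simp: link_sheaf_data_def\<close>)
  have longitude: "f s (\<rho> (l s) (rinv_vec (g s))) = (1 / d s) * f s (\<rho> (l s) (rinv_vec (f s)))"
    if "s \<in> {1..r}" for s
    by (intro functional_image_eq_if_preserves[where W = "W s"] f_s lin_\<rho>)
      (use assms(1) d that in \<open>auto simp: link_sheaf_data_def\<close>)
  have f_scale: "f s (scale c x) = c * f s x" if "s \<in> {1..r}" for s c x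
    using f_s(1)[OF that] by (metis module_hom.scale module_hom_linearI)
  have "aug_cord \<rho> m g s t \<gamma> = d s / d t * aug_cord \<rho> m f s t \<gamma>"
    if "s \<in> {1..r}" "t \<in> {1..r}" "\<gamma> \<in> carrier G" for s t \<gamma>
    using that d meridian[of t] f_scale module_hom.scale[OF module_hom_linearI[OF lin_\<rho>]]
    by (simp add: aug_cord_def)
  moreover have "aug_mu \<rho> m g s = aug_mu \<rho> m f s" if "s \<in> {1..r}" for s
    using that d meridian[of s] f_scale by (simp add: aug_mu_def)
  moreover have "aug_lambda \<rho> l g s = aug_lambda \<rho> l f s" if "s \<in> {1..r}" for s
    using that d longitude by (simp add: aug_lambda_def)
  ultimately show ?thesis
    unfolding dilation_equiv_def using d by (intro exI[of _ d]) simp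
qed

end
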